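(* Fix integers $m \ge 1$ and $n_1,\dots,n_m \ge 2$, and consider the $m$-dimensional single parity-check product code transmitted over the binary erasure channel with erasure probability $\epsilon \in [0,1]$. Let $P_{\mathrm{SC}}$ be its block error probability under successive cancellation decoding and $P_{\mathrm{E}}$ its block error probability under Elias' decoding (both defined in the context). Then \[ P_{\mathrm{SC}} \le P_{\mathrm{E}}. \]
   Context: Index set and code. Let $A = \{1,\dots,n_1\}\times\cdots\times\{1,\dots,n_m\}$. The code is the set of binary arrays $x: A \to \{0,1\}$ in which every line in every direction $\ell$ has even weight; a line in direction $\ell$ is obtained by fixing all coordinates except the $\ell$-th. This is the product of the $(n_\ell, n_\ell-1)$ single parity-check codes. Its information positions are $A_{\mathrm{info}} = \{a : a_\ell \le n_\ell-1 \text{ for all } \ell\}$. Channel. Each entry is independently erased with probability $\epsilon$ and otherwise received correctly. Notation. For $\ell = 0,\dots,m$ let $A_\ell = \{a \in A : a_i \le n_i-1 \text{ for } i \le \ell\}$. For $a \in A$ and $b \in \{1,\dots,n_\ell\}$, let $a[\ell\leftarrow b]$ denote $a$ with its $\ell$-th coordinate replaced by $b$. Set $E_0(a) = S_0(a) = $ "entry $a$ is not erased". Elias' decoder. This is a one-sweep decoder over dimensions $1,\dots,m$. For $\ell \ge 1$ and $a \in A_\ell$, $E_\ell(a)$ is true iff $E_{\ell-1}(a)$ is true, or $E_{\ell-1}(a[\ell\leftarrow b])$ is true for all $b \in \{1,\dots,n_\ell\}\setminus\{a_\ell\}$. Then $P_{\mathrm{E}} = \Pr[\exists\, a \in A_{\mathrm{info}}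 : E_m(a) \text{ false}]$. Successive cancellation decoder. Information bits are decoded in lexicographic order of $(a_1,\dots,a_m)$, and local SPC decisions exploit previously decided bits; over the erasure channel decisions are never wrong, only erased. Its block error event coincides with the following. For $\ell \ge 1$ and $a \in A_\ell$, $S_\ell(a)$ is true iff $S_{\ell-1}(a)$ is true, or $S_{\ell-1}(a[\ell\leftarrow b])$ is true for all $b$ with $a_\ell < b \le n_\ell$. Then $P_{\mathrm{SC}} = \Pr[\exists\, a \in A_{\mathrm{info}} : S_m(a) \text{ false}]$. *)

theory Defs
  imports "HOL-Library.FuncSet" Complex_Main
begin

(* Index set A = {1..n_1} x ... x {1..n_m}, coordinates indexed 1..m,
   represented as extensional functions on {1..m}. *)
definition idx :: "nat \<Rightarrow> (nat \<Rightarrow> nat) \<Rightarrow> (nat \<Rightarrow> nat) set" where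
  "idx m n = PiE {1..m} (\<lambda>i. {1..n i})"

definition A_lev :: "nat \<Rightarrow> (nat \<Rightarrow> nat) \<Rightarrow> nat \<Rightarrow> (nat \<Rightarrow> nat) set" where
  "A_lev m n l = {a \<in> idx m n. \<forall>i\<in>{1..l}. a i \<le> n i - 1}"

definition A_info :: "nat \<Rightarrow> (nat \<Rightarrow> nat) \<Rightarrow> (nat \<Rightarrow> nat) set" where
  "A_info m n = A_lev m n m"

fun E_dec :: "(nat \<Rightarrow> nat) \<Rightarrow> (nat \<Rightarrow> nat) set \<Rightarrow> nat \<Rightarrow> (nat \<Rightarrow> nat) \<Rightarrow> bool" where
  "E_dec n er 0 a = (a \<notin> er)"
| "E_dec n er (Suc l) a =
     (E_dec n er l a \<or>
      (\<forall>b\<in>{1..n (Suc l)} - {a (Suc l)}. E_dec n er l (a(Suc l := b))))"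

fun S_dec :: "(nat \<Rightarrow> nat) \<Rightarrow> (nat \<Rightarrow> nat) set \<Rightarrow> nat \<Rightarrow> (nat \<Rightarrow> nat) \<Rightarrow> bool" where
  "S_dec n er 0 a = (a \<notin> er)"
| "S_dec n er (Suc l) a =
     (S_dec n er l a \<or>
      (\<forall>b\<in>{a (Suc l)<..n (Suc l)}. S_dec n er l (a(Suc l := b))))"

definition erasure_prob ::
  "nat \<Rightarrow> (nat \<Rightarrow> nat) \<Rightarrow> real \<Rightarrow> ((nat \<Rightarrow> nat) set \<Rightarrow> bool) \<Rightarrow> real" where
  "erasure_prob m n eps P =
     (\<Sum>er\<in>Pow (idx m n).
        (if P er then eps ^ card er * (1 - eps) ^ (card (idx m n) - card er) else 0))"

definition P_E :: "nat \<Rightarrow> (nat \<Rightarrow> nat) \<Rightarrow> real \<Rightarrow> real" where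
  "P_E m n eps = erasure_prob m n eps (\<lambda>er. \<exists>a\<in>A_info m n. \<not> E_dec n er m a)"

definition P_SC :: "nat \<Rightarrow> (nat \<Rightarrow> nat) \<Rightarrow> real \<Rightarrow> real" where
  "P_SC m n eps = erasure_prob m n eps (\<lambda>er. \<exists>a\<in>A_info m n. \<not> S_dec n er m a)"

end

theory Submission
  imports Defs
begin

text \<open>Elias' decoder recovers position \<open>a\<close> in dimension \<open>\<ell>\<close> only if all other positions of its
line are recovered, whereas successive cancellation needs only those after \<open>a\<^sub>\<ell>\<close>. Hence, pattern
by pattern, every position recovered by Elias' decoder is recovered by successive cancellation,
and the error event of SC is contained in that of Elias' decoder. The inclusion holds for every
erasure pattern.\<close>

lemma S_dec_if_E_dec: "E_dec n er l a \<Longrightarrow> S_dec n er l a"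
proof (induction l arbitrary: a)
  case 0
  then show ?case by simp
next
  case (Suc l)
  have "{a (Suc l)<..n (Suc l)} \<subseteq> {1..n (Suc l)} - {a (Suc l)}"
    by auto
  with Suc show ?case
    by (auto dest: Suc.IH)
qed

lemma erasure_prob_mono:
  assumes "0 \<le> eps" "eps \<le> 1"
    and "\<And>er. er \<subseteq> idx m n \<Longrightarrow> P er \<Longrightarrow> Q er"
  shows "erasure_prob m n eps P \<le> erasure_prob m n eps Q"
  unfolding erasure_prob_def
proof (rule sum_mono)
  fix er
  assume "er \<in> Pow (idx m n)"
  moreover have "0 \<le> eps ^ card er * (1 - eps) ^ (card (idx m n) - card er)"
    using assms(1,2) by simp
  ultimately show "(if P er then eps ^ card er * (1 - eps) ^ (card (idx m n) - card er) else 0)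
      \<le> (if Q er then eps ^ card er * (1 - eps) ^ (card (idx m n) - card er) else 0)"
    using assms(3) by auto
qed

theorem theorem2:
  fixes m :: nat and n :: "nat \<Rightarrow> nat" and eps :: real
  assumes "m \<ge> 1"
    and "\<forall>i\<in>{1..m}. n i \<ge> 2"
    and "0 \<le> eps" and "eps \<le> 1"
  shows "P_SC m n eps \<le> P_E m n eps"
  unfolding P_SC_def P_E_def
  using assms(3,4) by (rule erasure_prob_mono) (blast intro: S_dec_if_E_dec)

end
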